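(* Let $G$ and $H$ be symmetric convex $N$-player games. Then for every player $i\in A$, $$R_i(G+H)\ge R_i(G)+R_i(H).$$
   Context: Let $A=\{1,\dots,N\}$ be a finite set of players. A game is any function $G:2^A\to\mathbb{R}$; sums of games are taken pointwise. A game $G$ is symmetric convex if there is a function $g:\{0,1,\dots,N\}\to\mathbb{R}$ with $G(S)=g(|S|)$ for all $S\subseteq A$, such that the increments $g(k+1)-g(k)$ are nonnegative for all $0\le k<N$ and nondecreasing in $k$. For a player $i$ and a coalition $S\subseteq A\setminus\{i\}$, the marginal contribution is $d_iG(S)=G(S\cup\{i\})-G(S)$. Let $f_i$ be a random subset of $A\setminus\{i\}$ with distribution $\Pr\{f_i=S\}=\frac{|S|!\,(N-|S|-1)!}{N!}$ for each $S\subseteq A\setminus\{i\}$. The Shapley uncertainty of $G$ for player $i$ is $R_i(G)=\mathrm{Var}[d_iG(f_i)]$. *)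

theory Defs
  imports Complex_Main
begin

type_synonym game = "nat set \<Rightarrow> real"

definition players :: "nat \<Rightarrow> nat set" where
  "players N = {1..N}"

definition symmetric_convex :: "nat \<Rightarrow> game \<Rightarrow> bool" where
  "symmetric_convex N G \<longleftrightarrow>
     (\<exists>g :: nat \<Rightarrow> real.
        (\<forall>S. S \<subseteq> players N \<longrightarrow> G S = g (card S)) \<and>
        (\<forall>k<N. g (k + 1) - g k \<ge> 0) \<and>
        (\<forall>k. k + 1 < N \<longrightarrow> g (k + 1) - g k \<le> g (k + 2) - g (k + 1)))"

definition marginal :: "game \<Rightarrow> nat \<Rightarrow> nat set \<Rightarrow> real" where
  "marginal G i S = G (insert i S) - G S"

text \<open>Probability that the random coalition f_i equals S (S a subset of A without i).\<close>
definition shapley_prob :: "nat \<Rightarrow> nat set \<Rightarrow> real" where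
  "shapley_prob N S = fact (card S) * fact (N - card S - 1) / fact N"

definition shapley_mean :: "nat \<Rightarrow> game \<Rightarrow> nat \<Rightarrow> real" where
  "shapley_mean N G i =
     (\<Sum>S\<in>Pow (players N - {i}). shapley_prob N S * marginal G i S)"

definition shapley_uncertainty :: "nat \<Rightarrow> game \<Rightarrow> nat \<Rightarrow> real" where
  "shapley_uncertainty N G i =
     (\<Sum>S\<in>Pow (players N - {i}).
        shapley_prob N S * (marginal G i S - shapley_mean N G i)\<^sup>2)"

end

theory Submission
  imports Defs
begin

text \<open>For a fixed player i, the Shapley distribution turns the marginal contribution into a
random variable, and Var(X + Y) = Var X + Var Y + 2 Cov(X, Y).  In a symmetric convex game the
marginal contribution of i to S depends only on |S| and is nondecreasing in it, so the marginals
of G and H are similarly ordered functions of the coalition.  Writing twice the covariance as the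
double sum of p(a) p(b) (X a - X b) (Y a - Y b), as in Chebyshev's sum inequality, shows that it
is nonnegative.\<close>

definition weighted_mean :: "('a \<Rightarrow> real) \<Rightarrow> 'a set \<Rightarrow> ('a \<Rightarrow> real) \<Rightarrow> real" where
  "weighted_mean p I X = (\<Sum>a\<in>I. p a * X a)"

definition weighted_covariance ::
    "('a \<Rightarrow> real) \<Rightarrow> 'a set \<Rightarrow> ('a \<Rightarrow> real) \<Rightarrow> ('a \<Rightarrow> real) \<Rightarrow> real" where
  "weighted_covariance p I X Y =
     (\<Sum>a\<in>I. p a * (X a - weighted_mean p I X) * (Y a - weighted_mean p I Y))"

lemma weighted_mean_add:
  "weighted_mean p I (\<lambda>a. X a + Y a) = weighted_mean p I X + weighted_mean p I Y"
  by (simp add: weighted_mean_def distrib_left sum.distrib)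

lemma weighted_covariance_add_left:
  "weighted_covariance p I (\<lambda>a. X a + Y a) Z
     = weighted_covariance p I X Z + weighted_covariance p I Y Z"
  unfolding weighted_covariance_def weighted_mean_add sum.distrib[symmetric]
  by (intro sum.cong refl) (simp add: algebra_simps)

lemma weighted_covariance_commute:
  "weighted_covariance p I X Y = weighted_covariance p I Y X"
  by (simp add: weighted_covariance_def mult.commute mult.left_commute)

lemma weighted_covariance_add_self:
  "weighted_covariance p I (\<lambda>a. X a + Y a) (\<lambda>a. X a + Y a)
     = weighted_covariance p I X X + weighted_covariance p I Y Y + 2 * weighted_covariance p I X Y"
  by (simp add: weighted_covariance_add_left weighted_covariance_commute[of p I _ "\<lambda>a. X a + Y a"]
      weighted_covariance_commute[of p I Y X])

lemma weighted_mean_centered: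
  assumes "sum p I = 1"
  shows "(\<Sum>a\<in>I. p a * (X a - weighted_mean p I X)) = 0"
  using assms
  by (simp add: weighted_mean_def right_diff_distrib sum_subtractf sum_distrib_right[symmetric])

lemma weighted_covariance_double_sum:
  assumes "sum p I = 1"
  shows "(\<Sum>a\<in>I. \<Sum>b\<in>I. p a * p b * ((X a - X b) * (Y a - Y b)))
           = 2 * weighted_covariance p I X Y"
proof -
  define x where "x a = X a - weighted_mean p I X" for a
  define y where "y a = Y a - weighted_mean p I Y" for a
  have "(\<Sum>a\<in>I. \<Sum>b\<in>I. p a * p b * ((X a - X b) * (Y a - Y b)))
      = (\<Sum>a\<in>I. \<Sum>b\<in>I. p b * (p a * x a * y a) + p a * (p b * x b * y b)
                           - (p a * x a) * (p b * y b) - (p a * y a) * (p b * x b))"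
    by (intro sum.cong refl) (simp add: x_def y_def algebra_simps)
  also have "\<dots> = 2 * (\<Sum>a\<in>I. p a * x a * y a)
                   - 2 * (\<Sum>a\<in>I. p a * x a) * (\<Sum>a\<in>I. p a * y a)"
  proof -
    have "(\<Sum>a\<in>I. \<Sum>b\<in>I. p b * (p a * x a * y a)) = (\<Sum>a\<in>I. p a * x a * y a)"
      by (simp add: sum_distrib_right[symmetric] assms)
    moreover have "(\<Sum>a\<in>I. \<Sum>b\<in>I. p a * (p b * x b * y b)) = (\<Sum>a\<in>I. p a * x a * y a)"
      by (simp add: sum_distrib_left[symmetric] sum_distrib_right[symmetric] assms)
    ultimately show ?thesis
      by (simp add: sum_subtractf sum.distrib sum_product[symmetric])
  qed
  also have "\<dots> = 2 * weighted_covariance p I X Y"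
    using weighted_mean_centered[OF assms, of X] by (simp add: weighted_covariance_def x_def y_def)
  finally show ?thesis .
qed

lemma weighted_covariance_nonneg_if_similarly_ordered:
  assumes "sum p I = 1" and "\<And>a. a \<in> I \<Longrightarrow> p a \<ge> 0"
    and "\<And>a b. a \<in> I \<Longrightarrow> b \<in> I \<Longrightarrow> (X a - X b) * (Y a - Y b) \<ge> 0"
  shows "weighted_covariance p I X Y \<ge> 0"
proof -
  have "0 \<le> (\<Sum>a\<in>I. \<Sum>b\<in>I. p a * p b * ((X a - X b) * (Y a - Y b)))"
    by (intro sum_nonneg mult_nonneg_nonneg[OF mult_nonneg_nonneg] assms(2,3))
  then show ?thesis
    using weighted_covariance_double_sum[OF assms(1), of X Y] by linarith
qed

lemma sum_Pow_by_card:
  assumes "finite A"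
  shows "(\<Sum>S\<in>Pow A. f (card S)) = (\<Sum>k\<le>card A. of_nat (card A choose k) * f k)"
proof -
  have "(\<Sum>S\<in>Pow A. f (card S)) = (\<Sum>k\<le>card A. \<Sum>S\<in>{S. S \<in> Pow A \<and> card S = k}. f (card S))"
    by (rule sum.group[symmetric]) (use assms in \<open>auto intro: card_mono\<close>)
  also have "\<dots> = (\<Sum>k\<le>card A. \<Sum>S\<in>{S. S \<subseteq> A \<and> card S = k}. f k)"
    by (intro sum.cong) auto
  also have "\<dots> = (\<Sum>k\<le>card A. of_nat (card A choose k) * f k)"
    by (simp add: n_subsets[OF assms])
  finally show ?thesis .
qed

lemma sum_shapley_prob:
  assumes "i \<in> players N"
  shows "(\<Sum>S\<in>Pow (players N - {i}). shapley_prob N S) = 1"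
proof -
  define n where "n = N - 1"
  have N: "N = Suc n" and card_others: "card (players N - {i}) = n"
    and finite_others: "finite (players N - {i})"
    using assms by (auto simp: players_def n_def)
  have "(\<Sum>S\<in>Pow (players N - {i}). shapley_prob N S)
      = (\<Sum>k\<le>n. of_nat (n choose k) * (fact k * fact (N - k - 1) / fact N))"
    using sum_Pow_by_card[OF finite_others, of "\<lambda>k. fact k * fact (N - k - 1) / fact N"]
    by (simp only: shapley_prob_def card_others)
  also have "\<dots> = (\<Sum>k\<le>n. fact n / fact N)"
  proof (intro sum.cong refl)
    fix k assume "k \<in> {..n}"
    then have "k \<le> n" and "N - k - 1 = n - k"
      by (auto simp: n_def)
    then show "of_nat (n choose k) * (fact k * fact (N - k - 1) / fact N)
                 = (fact n / fact N :: real)"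
      by (simp add: binomial_fact)
  qed
  also have "\<dots> = 1"
    by (simp add: N)
  finally show ?thesis .
qed

lemma convex_increments_mono:
  fixes g :: "nat \<Rightarrow> real"
  assumes "\<forall>k. k + 1 < N \<longrightarrow> g (k + 1) - g k \<le> g (k + 2) - g (k + 1)"
    and "m \<le> n" and "n < N"
  shows "g (m + 1) - g m \<le> g (n + 1) - g n"
  using assms(2,3)
proof (induction n rule: dec_induct)
  case (step n)
  then have "g (m + 1) - g m \<le> g (n + 1) - g n" by simp
  also have "\<dots> \<le> g (n + 2) - g (n + 1)" using assms(1) step.prems step.hyps by auto
  finally show ?case by (simp add: numeral_2_eq_2)
qed simp

lemma symmetric_convex_marginal_mono:
  assumes "symmetric_convex N G" and "i \<in> players N"
    and "S \<subseteq> players N - {i}" and "T \<subseteq> players N - {i}" and "card S \<le> card T"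
  shows "marginal G i S \<le> marginal G i T"
proof -
  obtain g where g: "\<And>S. S \<subseteq> players N \<Longrightarrow> G S = g (card S)"
    and convex: "\<forall>k. k + 1 < N \<longrightarrow> g (k + 1) - g k \<le> g (k + 2) - g (k + 1)"
    using assms(1) unfolding symmetric_convex_def by blast
  have marginal_eq: "marginal G i U = g (card U + 1) - g (card U)"
    and card_less: "card U < N" if "U \<subseteq> players N - {i}" for U
  proof -
    have "finite U" "i \<notin> U" "U \<subseteq> players N" "insert i U \<subseteq> players N"
      using that assms(2) finite_subset by (auto simp: players_def)
    then show "marginal G i U = g (card U + 1) - g (card U)"
      by (simp add: marginal_def g)
    have "card U \<le> card (players N - {i})" using that by (intro card_mono) (auto simp: players_def)
    with assms(2) show "card U < N" by (simp add: players_def) arith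
  qed
  show ?thesis
    using convex_increments_mono[OF convex assms(5) card_less[OF assms(4)]]
    by (simp add: marginal_eq assms(3,4))
qed

lemma symmetric_convex_marginals_similarly_ordered:
  assumes "symmetric_convex N G" and "symmetric_convex N H" and "i \<in> players N"
    and "S \<subseteq> players N - {i}" and "T \<subseteq> players N - {i}"
  shows "(marginal G i S - marginal G i T) * (marginal H i S - marginal H i T) \<ge> 0"
proof (cases "card S \<le> card T")
  case True
  then show ?thesis
    using symmetric_convex_marginal_mono[OF assms(1,3,4,5)]
      symmetric_convex_marginal_mono[OF assms(2,3,4,5)]
    by (simp add: mult_nonpos_nonpos)
next
  case False
  then show ?thesis
    using symmetric_convex_marginal_mono[OF assms(1,3,5,4)]
      symmetric_convex_marginal_mono[OF assms(2,3,5,4)]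
    by simp
qed

lemma shapley_uncertainty_eq_weighted_covariance:
  "shapley_uncertainty N G i
     = weighted_covariance (shapley_prob N) (Pow (players N - {i})) (marginal G i) (marginal G i)"
  by (simp add: shapley_uncertainty_def weighted_covariance_def shapley_mean_def weighted_mean_def
      power2_eq_square mult.assoc)

theorem mainTheorem8:
  fixes N :: nat and G H :: game and i :: nat
  assumes "symmetric_convex N G" and "symmetric_convex N H"
    and "i \<in> players N"
  shows "shapley_uncertainty N (\<lambda>S. G S + H S) i
           \<ge> shapley_uncertainty N G i + shapley_uncertainty N H i"
proof -
  let ?p = "shapley_prob N" and ?I = "Pow (players N - {i})"
  have "marginal (\<lambda>S. G S + H S) i = (\<lambda>S. marginal G i S + marginal H i S)"
    by (simp add: marginal_def fun_eq_iff)
  then have "shapley_uncertainty N (\<lambda>S. G S + H S) i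
      = shapley_uncertainty N G i + shapley_uncertainty N H i
        + 2 * weighted_covariance ?p ?I (marginal G i) (marginal H i)"
    by (simp add: shapley_uncertainty_eq_weighted_covariance weighted_covariance_add_self)
  moreover have "weighted_covariance ?p ?I (marginal G i) (marginal H i) \<ge> 0"
    by (rule weighted_covariance_nonneg_if_similarly_ordered[OF sum_shapley_prob[OF assms(3)]])
      (auto simp: shapley_prob_def intro: symmetric_convex_marginals_similarly_ordered[OF assms])
  ultimately show ?thesis by linarith
qed

end
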